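(* Let $\varepsilon>0$ and let $G$ be a graph on $n$ vertices such that no subgraph of $G$ with at least $n/2$ vertices is an $\varepsilon$-expander (i.e. $G$ is $(n/2,\varepsilon)$-bounded). Then $G$ has a $(2\varepsilon n/3,\,2/3)$-separator.
   Context: For a graph $G'=(V',E')$ and $U\subseteq V'$, $N(U)$ is the set of vertices of $V'\setminus U$ adjacent in $G'$ to some vertex of $U$; $G'$ is an $\varepsilon$-expander if $|N(U)|\ge\varepsilon|U|$ for all $U\subseteq V'$ with $|U|\le|V'|/2$. For a real $s\ge0$ and $\tfrac12\le\alpha<1$, a set $S\subseteq V$ is an $(s,\alpha)$-separator of $G=(V,E)$ if there are $A,B\subseteq V$ with $V=A\,\dot\cup\,B\,\dot\cup\,S$, $|S|\le s$, $|A|,|B|\le\alpha|V|$, and no edge of $G$ between $A$ and $B$. *)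

theory Defs
  imports Main Complex_Main
begin

definition graph :: "'a set \<Rightarrow> ('a \<Rightarrow> 'a \<Rightarrow> bool) \<Rightarrow> bool" where
  "graph V E \<longleftrightarrow> finite V \<and> (\<forall>u v. E u v \<longrightarrow> u \<in> V \<and> v \<in> V)
     \<and> (\<forall>u v. E u v \<longrightarrow> E v u) \<and> (\<forall>u. \<not> E u u)"

definition subgraph :: "'a set \<Rightarrow> ('a \<Rightarrow> 'a \<Rightarrow> bool) \<Rightarrow> 'a set \<Rightarrow> ('a \<Rightarrow> 'a \<Rightarrow> bool) \<Rightarrow> bool" where
  "subgraph V' E' V E \<longleftrightarrow> graph V' E' \<and> V' \<subseteq> V \<and> (\<forall>u v. E' u v \<longrightarrow> E u v)"

definition nbhd :: "'a set \<Rightarrow> ('a \<Rightarrow> 'a \<Rightarrow> bool) \<Rightarrow> 'a set \<Rightarrow> 'a set" where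
  "nbhd V' E' U = {v \<in> V' - U. \<exists>u\<in>U. E' u v}"

definition expander :: "real \<Rightarrow> 'a set \<Rightarrow> ('a \<Rightarrow> 'a \<Rightarrow> bool) \<Rightarrow> bool" where
  "expander \<epsilon> V' E' \<longleftrightarrow>
     (\<forall>U. U \<subseteq> V' \<and> real (card U) \<le> real (card V') / 2 \<longrightarrow>
        real (card (nbhd V' E' U)) \<ge> \<epsilon> * real (card U))"

definition separator :: "real \<Rightarrow> real \<Rightarrow> 'a set \<Rightarrow> ('a \<Rightarrow> 'a \<Rightarrow> bool) \<Rightarrow> 'a set \<Rightarrow> bool" where
  "separator s \<alpha> V E S \<longleftrightarrow>
     (\<exists>A B. V = A \<union> B \<union> S \<and> A \<inter> B = {} \<and> A \<inter> S = {} \<and> B \<inter> S = {}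
        \<and> real (card S) \<le> s
        \<and> real (card A) \<le> \<alpha> * real (card V) \<and> real (card B) \<le> \<alpha> * real (card V)
        \<and> (\<forall>a\<in>A. \<forall>b\<in>B. \<not> E a b))"

end

theory Submission
  imports Defs
begin

text \<open>
  Grow a set A of vertices, separated from the rest by a set S \<supseteq> N(A) with |S| \<le> \<epsilon>|A|,
  while |A| \<le> n/3.
  As long as the rest W = V - (A \<union> S) has at least n/2 vertices, the subgraph induced by W
  is not an \<epsilon>-expander, so it contains U with |U| \<le> |W|/2 and |N(U)| < \<epsilon>|U|; moving U
  into A and N(U) into S preserves the invariant and keeps |A| \<le> (n + |A|)/2 \<le> 2n/3.
  The process stops either when |W| < n/2 or when |A| > n/3; in both cases A, W and S
  form a (2\<epsilon>n/3, 2/3)-separation.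
\<close>

definition restrict_edges :: "'a set \<Rightarrow> ('a \<Rightarrow> 'a \<Rightarrow> bool) \<Rightarrow> 'a \<Rightarrow> 'a \<Rightarrow> bool" where
  "restrict_edges W E = (\<lambda>u v. E u v \<and> u \<in> W \<and> v \<in> W)"

lemma subgraph_restrict_edges:
  assumes "graph V E" "W \<subseteq> V"
  shows "subgraph W (restrict_edges W E) V E"
  using assms unfolding subgraph_def graph_def restrict_edges_def
  by (auto intro: finite_subset)

definition partial_separation :: "real \<Rightarrow> 'a set \<Rightarrow> ('a \<Rightarrow> 'a \<Rightarrow> bool) \<Rightarrow> 'a set \<Rightarrow> 'a set \<Rightarrow> bool" where
  "partial_separation \<epsilon> V E A S \<longleftrightarrow> A \<subseteq> V \<and> S \<subseteq> V \<and> A \<inter> S = {}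
     \<and> (\<forall>a\<in>A. \<forall>b\<in>V - (A \<union> S). \<not> E a b) \<and> real (card S) \<le> \<epsilon> * real (card A)"

lemma partial_separation_empty: "partial_separation \<epsilon> V E {} {}"
  unfolding partial_separation_def by simp

lemma partial_separation_card:
  assumes "finite V" "partial_separation \<epsilon> V E A S"
  shows "card (V - (A \<union> S)) + card A + card S = card V"
proof -
  have sub: "A \<union> S \<subseteq> V" and disj: "A \<inter> S = {}"
    using assms(2) unfolding partial_separation_def by auto
  then have fin: "finite A" "finite S" using assms(1) by (auto intro: finite_subset)
  have "card (V - (A \<union> S)) = card V - card (A \<union> S)"
    using sub fin by (simp add: card_Diff_subset)
  moreover have "card (A \<union> S) \<le> card V" using sub assms(1) by (rule card_mono[rotated])
  moreover have "card (A \<union> S) = card A + card S" using fin disj by (rule card_Un_disjoint)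
  ultimately show ?thesis by simp
qed

lemma separator_if_partial_separation:
  assumes "0 \<le> \<epsilon>" "partial_separation \<epsilon> V E A S"
    and "real (card A) \<le> 2/3 * real (card V)"
    and "real (card (V - (A \<union> S))) \<le> 2/3 * real (card V)"
  shows "separator (2 * \<epsilon> * real (card V) / 3) (2/3) V E S"
proof -
  have "real (card S) \<le> \<epsilon> * real (card A)"
    using assms(2) unfolding partial_separation_def by simp
  also have "\<dots> \<le> \<epsilon> * (2/3 * real (card V))"
    using assms(1,3) by (rule mult_left_mono[rotated])
  finally have "real (card S) \<le> 2 * \<epsilon> * real (card V) / 3" by simp
  then show ?thesis
    using assms(2-4) unfolding separator_def partial_separation_def
    by (intro exI[of _ A] exI[of _ "V - (A \<union> S)"]) auto
qed

lemma partial_separation_grow: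
  assumes "finite V" "partial_separation \<epsilon> V E A S"
    and "\<not> expander \<epsilon> (V - (A \<union> S)) (restrict_edges (V - (A \<union> S)) E)"
  obtains A' S' where "partial_separation \<epsilon> V E A' S'" "A \<subset> A'"
    "real (card A') \<le> real (card A) + real (card (V - (A \<union> S))) / 2"
proof -
  define W where "W = V - (A \<union> S)"
  obtain U where U: "U \<subseteq> W" "real (card U) \<le> real (card W) / 2"
    and NU: "real (card (nbhd W (restrict_edges W E) U)) < \<epsilon> * real (card U)"
    using assms(3) unfolding expander_def W_def[symmetric] by force
  define N where "N = nbhd W (restrict_edges W E) U"
  have N: "N \<subseteq> W - U" "\<And>u v. u \<in> U \<Longrightarrow> v \<in> W - U \<Longrightarrow> E u v \<Longrightarrow> v \<in> N"
    unfolding N_def nbhd_def restrict_edges_def using U by auto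
  have "U \<noteq> {}" using NU by auto
  have fin: "finite A" "finite S" "finite U" "finite N"
    using assms(1,2) U N unfolding partial_separation_def W_def
    by (auto intro: finite_subset)
  have cardA': "card (A \<union> U) = card A + card U"
    using fin U unfolding W_def by (intro card_Un_disjoint) auto
  have "real (card (S \<union> N)) \<le> real (card S) + real (card N)"
    using card_Un_le[of S N] by linarith
  also have "\<dots> \<le> \<epsilon> * real (card (A \<union> U))"
    using assms(2) NU cardA' unfolding partial_separation_def N_def
    by (simp add: distrib_left)
  finally have "partial_separation \<epsilon> V E (A \<union> U) (S \<union> N)"
    using assms(2) U N unfolding partial_separation_def W_def by auto
  moreover have "A \<subset> A \<union> U" using \<open>U \<noteq> {}\<close> U unfolding W_def by auto
  moreover have "real (card (A \<union> U)) \<le> real (card A) + real (card W) / 2"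
    using cardA' U(2) by simp
  ultimately show ?thesis using that unfolding W_def by blast
qed

lemma partial_separation_extends_to_separator:
  assumes "0 \<le> \<epsilon>" "graph V E"
    and bounded: "\<And>V' E'. subgraph V' E' V E \<Longrightarrow> real (card V') \<ge> real (card V) / 2
           \<Longrightarrow> \<not> expander \<epsilon> V' E'"
    and "partial_separation \<epsilon> V E A S" "real (card A) \<le> real (card V) / 3"
  shows "\<exists>S. separator (2 * \<epsilon> * real (card V) / 3) (2/3) V E S"
  using assms(4,5)
proof (induction "card (V - A)" arbitrary: A S rule: less_induct)
  case less
  define W where "W = V - (A \<union> S)"
  have "finite V" using assms(2) unfolding graph_def by simp
  have cardW: "card W + card A + card S = card V"
    using partial_separation_card[OF \<open>finite V\<close> less.prems(1)] unfolding W_def .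
  show ?case
  proof (cases "real (card W) < real (card V) / 2")
    case True
    have "real (card A) \<le> 2/3 * real (card V)" using less.prems(2) by simp
    moreover have "real (card W) \<le> 2/3 * real (card V)" using True by simp
    ultimately show ?thesis
      using separator_if_partial_separation[OF assms(1) less.prems(1)] unfolding W_def by blast
  next
    case False
    have "W \<subseteq> V" unfolding W_def by blast
    then have "\<not> expander \<epsilon> W (restrict_edges W E)"
      using bounded subgraph_restrict_edges[OF assms(2)] False by simp
    then obtain A' S' where A': "partial_separation \<epsilon> V E A' S'" "A \<subset> A'"
      and cardA': "real (card A') \<le> real (card A) + real (card W) / 2"
      using partial_separation_grow[OF \<open>finite V\<close> less.prems(1)] unfolding W_def by blast
    show ?thesis
    proof (cases "real (card A') \<le> real (card V) / 3")
      case True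
      have "A' \<subseteq> V" using A'(1) unfolding partial_separation_def by simp
      then have "card (V - A') < card (V - A)"
        using A'(2) \<open>finite V\<close> by (intro psubset_card_mono) auto
      then show ?thesis using less.hyps[OF _ A'(1) True] by simp
    next
      case False
      have "card (V - (A' \<union> S')) + card A' + card S' = card V"
        using partial_separation_card[OF \<open>finite V\<close> A'(1)] .
      then have "real (card (V - (A' \<union> S'))) \<le> 2/3 * real (card V)"
        using False by linarith
      moreover have "real (card A') \<le> 2/3 * real (card V)"
        using cardA' cardW less.prems(2) by linarith
      ultimately show ?thesis
        using separator_if_partial_separation[OF assms(1) A'(1)] by blast
    qed
  qed
qed

theorem lemma11:
  fixes V :: "'a set" and E :: "'a \<Rightarrow> 'a \<Rightarrow> bool" and \<epsilon> :: real
  assumes "\<epsilon> > 0"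
    and "graph V E"
    and "\<And>V' E'. subgraph V' E' V E \<Longrightarrow> real (card V') \<ge> real (card V) / 2
           \<Longrightarrow> \<not> expander \<epsilon> V' E'"
  shows "\<exists>S. separator (2 * \<epsilon> * real (card V) / 3) (2/3) V E S"
  using assms partial_separation_empty
  by (intro partial_separation_extends_to_separator[of \<epsilon> V E "{}" "{}"]) auto

end
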